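(* Let $k$ be a field, $X$ a finite non-empty set, and for every $a\in X$ let $\sigma_a,\tau_a:X\to X$ be maps with each $\sigma_a$ bijective; let ${\cal A}$ be the special set-theoretic Yang–Baxter algebra of these data. Suppose $(X,+,\circ)$ is a brace and, for all $a,b\in X$, $\sigma_a(b)=-a+a\circ b$, $\sigma_{\sigma_a(b)}(\tau_b(a))=a$ and $w_aw_b=w_{a\circ b}$. Let ${\cal F}=\sum_{a\in X}h_a\otimes w_a^{-1}$ and, for an integer $n\ge2$, \[{\cal F}_{12\ldots n-1,n}:=\sum_{a_1,\ldots,a_{n-1}\in X}h_{a_1}\otimes h_{\sigma_{a_1}(a_2)}\otimes h_{\sigma_{a_1}(\sigma_{a_2}(a_3))}\otimes\cdots\otimes h_{\sigma_{a_1}(\sigma_{a_2}(\cdots\sigma_{a_{n-2}}(a_{n-1})\cdots))}\otimes w_{a_{n-1}}^{-1}w_{a_{n-2}}^{-1}\cdots w_{a_1}^{-1}\in{\cal A}^{\otimes n},\] and define recursively ${\cal F}_{12}:={\cal F}$ and ${\cal F}_{12\ldots n}:=({\cal F}_{12\ldots n-1}\otimes1_{\cal A})\,{\cal F}_{12\ldots n-1,n}$ for $n\ge3$. Then: \begin{enumerate} \item ${\cal F}_{12\ldots n-1,n}=(\Delta^{(n-1)}\otimes\mathrm{id}){\cal F}$; \item ${\cal F}_{12\ldots n}=\sum_{a_1,\ldots,a_{n-1}\in X}h_{a_1}\otimes h_{a_2}w_{a_1}^{-1}\otimes h_{a_3}w_{a_1\circ a_2}^{-1}\otimes\cdots\otimes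 h_{a_{n-1}}w^{-1}_{a_1\circ a_2\circ\cdots\circ a_{n-2}}\otimes w^{-1}_{a_1\circ a_2\circ\cdots\circ a_{n-1}}.$ \end{enumerate}
   Context: The special set-theoretic Yang–Baxter algebra ${\cal A}$ is the unital associative $k$-algebra generated by $1_{\cal A},h_a,w_a,w_a^{-1}$ ($a\in X$) subject to, for all $a,b\in X$: $h_ah_b=\delta_{a,b}h_a$, $w_a^{-1}w_a=w_aw_a^{-1}=1_{\cal A}$, $w_aw_b=w_{\sigma_a(b)}w_{\tau_b(a)}$, $w_ah_b=h_{\sigma_a(b)}w_a$, and $\sum_{a\in X}h_a=1_{\cal A}$. A brace is a set with two group operations $+$ (abelian) and $\circ$ such that $a\circ(b+c)=a\circ b-a+a\circ c$. $\Delta:{\cal A}\to{\cal A}\otimes{\cal A}$ is the algebra homomorphism with $\Delta(w_a^{\pm1})=w_a^{\pm1}\otimes w_a^{\pm1}$ and $\Delta(h_a)=\sum_{b,c\in X,\,b+c=a}h_b\otimes h_c$; $\Delta^{(m)}:{\cal A}\to{\cal A}^{\otimes m}$ denotes the iterated (coassociative) coproduct, with $\Delta^{(1)}=\mathrm{id}$ and $\Delta^{(2)}=\Delta$. *)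

theory Defs
  imports Main "HOL-Library.FuncSet"
begin

definition is_brace :: "('x::ab_group_add \<Rightarrow> 'x \<Rightarrow> 'x) \<Rightarrow> bool" where
  "is_brace cm \<longleftrightarrow>
     (\<exists>e. (\<forall>a b c. cm (cm a b) c = cm a (cm b c)) \<and> (\<forall>a. cm e a = a \<and> cm a e = a)
          \<and> (\<forall>a. \<exists>b. cm a b = e \<and> cm b a = e))
   \<and> (\<forall>a b c. cm a (b + c) = cm a b - a + cm a c)"

definition is_k_algebra :: "('k::field \<Rightarrow> 'b::ring_1) \<Rightarrow> bool" where
  "is_k_algebra \<iota> \<longleftrightarrow> \<iota> 0 = 0 \<and> \<iota> 1 = 1 \<and> (\<forall>x y. \<iota> (x + y) = \<iota> x + \<iota> y)
     \<and> (\<forall>x y. \<iota> (x * y) = \<iota> x * \<iota> y) \<and> (\<forall>x b. \<iota> x * b = b * \<iota> x)"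

definition YB_relations ::
  "('x \<Rightarrow> 'x \<Rightarrow> 'x) \<Rightarrow> ('x \<Rightarrow> 'x \<Rightarrow> 'x) \<Rightarrow>
   ('x::finite \<Rightarrow> 'b::ring_1) \<Rightarrow> ('x \<Rightarrow> 'b) \<Rightarrow> ('x \<Rightarrow> 'b) \<Rightarrow> bool" where
  "YB_relations \<sigma> \<tau> h w wi \<longleftrightarrow>
     (\<forall>a b. h a * h b = (if a = b then h a else 0))
   \<and> (\<forall>a. wi a * w a = 1 \<and> w a * wi a = 1)
   \<and> (\<forall>a b. w a * w b = w (\<sigma> a b) * w (\<tau> b a))
   \<and> (\<forall>a b. w a * h b = h (\<sigma> a b) * w a)
   \<and> (\<Sum>a\<in>UNIV. h a) = 1"

text \<open>A model of the tensor power A^{\<otimes>n} inside a ring B: for every slot i < n,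
  elements h i a, w i a, wi i a (the images of 1\<otimes>..\<otimes>h_a\<otimes>..\<otimes>1 etc.) satisfying the
  relations of A, with generators in different slots commuting.\<close>
definition tensor_model ::
  "nat \<Rightarrow> ('x \<Rightarrow> 'x \<Rightarrow> 'x) \<Rightarrow> ('x \<Rightarrow> 'x \<Rightarrow> 'x) \<Rightarrow>
   (nat \<Rightarrow> 'x::finite \<Rightarrow> 'b::ring_1) \<Rightarrow> (nat \<Rightarrow> 'x \<Rightarrow> 'b) \<Rightarrow> (nat \<Rightarrow> 'x \<Rightarrow> 'b) \<Rightarrow> bool" where
  "tensor_model n \<sigma> \<tau> h w wi \<longleftrightarrow>
     (\<forall>i<n. YB_relations \<sigma> \<tau> (h i) (w i) (wi i))
   \<and> (\<forall>i<n. \<forall>j<n. i \<noteq> j \<longrightarrow>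
        (\<forall>x\<in>range (h i) \<union> range (w i) \<union> range (wi i).
         \<forall>y\<in>range (h j) \<union> range (w j) \<union> range (wi j). x * y = y * x))"

definition sigma_chain :: "('x \<Rightarrow> 'x \<Rightarrow> 'x) \<Rightarrow> (nat \<Rightarrow> 'x) \<Rightarrow> nat \<Rightarrow> 'x" where
  "sigma_chain \<sigma> a j = foldr (\<lambda>i x. \<sigma> (a i) x) [0..<j] (a j)"

definition circ_chain :: "('x \<Rightarrow> 'x \<Rightarrow> 'x) \<Rightarrow> (nat \<Rightarrow> 'x) \<Rightarrow> nat \<Rightarrow> 'x" where
  "circ_chain cm a k = foldl (\<lambda>x i. cm x (a i)) (a 0) [1..<k]"

text \<open>F_{12...m-1,m} in A^{\<otimes>m} (slots 0..m-1), with a_1..a_{m-1} written a 0 .. a (m-2):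
  sum over a of  h_{c_1} \<otimes> ... \<otimes> h_{c_{m-1}} \<otimes> w^{-1}_{a_{m-1}} ... w^{-1}_{a_1}.\<close>
definition F_col ::
  "('x \<Rightarrow> 'x \<Rightarrow> 'x) \<Rightarrow> (nat \<Rightarrow> 'x::finite \<Rightarrow> 'b::ring_1) \<Rightarrow> (nat \<Rightarrow> 'x \<Rightarrow> 'b) \<Rightarrow> nat \<Rightarrow> 'b" where
  "F_col \<sigma> h wi m =
     (\<Sum>a\<in>Pi\<^sub>E {..<m-1} (\<lambda>_. UNIV).
        prod_list (map (\<lambda>i. if i < m - 1 then h i (sigma_chain \<sigma> a i)
                             else prod_list (map (\<lambda>j. wi (m-1) (a j)) (rev [0..<m-1])))
                   [0..<m]))"

primrec F_tot ::
  "('x \<Rightarrow> 'x \<Rightarrow> 'x) \<Rightarrow> (nat \<Rightarrow> 'x::finite \<Rightarrow> 'b::ring_1) \<Rightarrow> (nat \<Rightarrow> 'x \<Rightarrow> 'b) \<Rightarrow> nat \<Rightarrow> 'b" where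
  "F_tot \<sigma> h wi 0 = 1"
| "F_tot \<sigma> h wi (Suc m) =
     (if m < 2 then F_col \<sigma> h wi 2 else F_tot \<sigma> h wi m * F_col \<sigma> h wi (Suc m))"

text \<open>Delta^{(m)}(h_a) placed in slots 0..m-1, via Delta^{(1)} = id and
  Delta^{(m+1)} = (Delta^{(m)} \<otimes> id) \<circ> Delta, Delta(h_a) = sum_{b+c=a} h_b \<otimes> h_c.\<close>
primrec Delta_h ::
  "(nat \<Rightarrow> 'x::{finite,ab_group_add} \<Rightarrow> 'b::ring_1) \<Rightarrow> nat \<Rightarrow> 'x \<Rightarrow> 'b" where
  "Delta_h h 0 a = h 0 a"
| "Delta_h h (Suc m) a =
     (if m = 0 then h 0 a
      else (\<Sum>p\<in>{(b, c). b + c = a}. Delta_h h m (fst p) * h m (snd p)))"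

definition F_tot_formula ::
  "('x \<Rightarrow> 'x \<Rightarrow> 'x) \<Rightarrow> (nat \<Rightarrow> 'x::finite \<Rightarrow> 'b::ring_1) \<Rightarrow> (nat \<Rightarrow> 'x \<Rightarrow> 'b) \<Rightarrow> nat \<Rightarrow> 'b" where
  "F_tot_formula cm h wi n =
     (\<Sum>a\<in>Pi\<^sub>E {..<n-1} (\<lambda>_. UNIV).
        prod_list (map (\<lambda>i. if i = 0 then h 0 (a 0)
                             else if i < n - 1 then h i (a i) * wi i (circ_chain cm a i)
                             else wi i (circ_chain cm a (n-1)))
                   [0..<n]))"

end

theory Submission
  imports Defs
begin

text \<open>
  Since \<sigma>_a(b) = -a + a \<circ> b is the lambda-map of the brace, \<sigma>_a \<sigma>_b = \<sigma>_{a \<circ> b}. Hence the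
  indices c_i = \<sigma>_{a_1 \<circ> ... \<circ> a_{i-1}}(a_i) of the h's in F_{12...n-1,n} satisfy
  c_1 + ... + c_i = a_1 \<circ> ... \<circ> a_i, and, each \<sigma>_a being injective, a \<mapsto> c is a bijection of
  X^{n-1}. Together with w^{-1}_{a_{n-1}} ... w^{-1}_{a_1} = w^{-1}_{a_1 \<circ> ... \<circ> a_{n-1}}, reindexing
  by c turns F_{12...n-1,n} into \<Sum>_c h_{c_1} \<otimes> ... \<otimes> h_{c_{n-1}} \<otimes> w^{-1}_{c_1 + ... + c_{n-1}},
  which is (\<Delta>^{(n-1)} \<otimes> id) F.

  For part 2, multiply the formula for n - 1 by F_{12...n-1,n}. In every tensor factor
  w^{-1}_x h_{\<sigma>_x(y)} = h_y w^{-1}_x and h_a h_b = \<delta>_{ab} h_a, so a product of two terms survives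
  only if the index tuple of the second extends that of the first, and the double sum collapses to
  the formula for n.
\<close>

lemma sum_PiE_lessThan_Suc:
  fixes f :: "(nat \<Rightarrow> 'x::finite) \<Rightarrow> 'b::comm_monoid_add"
  shows "(\<Sum>c\<in>Pi\<^sub>E {..<Suc m} (\<lambda>_. UNIV). f c) =
    (\<Sum>c\<in>Pi\<^sub>E {..<m} (\<lambda>_. UNIV). \<Sum>y\<in>UNIV. f (c(m := y)))"
proof -
  have "(\<Sum>c\<in>Pi\<^sub>E {..<Suc m} (\<lambda>_. UNIV). f c) =
      sum f ((\<lambda>(y, g). g(m := y)) ` (UNIV \<times> Pi\<^sub>E {..<m} (\<lambda>_. UNIV)))"
    by (simp add: lessThan_Suc PiE_insert_eq)
  also have "\<dots> = (\<Sum>(y, c)\<in>UNIV \<times> Pi\<^sub>E {..<m} (\<lambda>_. UNIV). f (c(m := y)))"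
    by (subst sum.reindex[OF inj_combinator[of m "{..<m}" "\<lambda>_. UNIV", simplified]])
      (simp add: split_def o_def)
  also have "\<dots> = (\<Sum>c\<in>Pi\<^sub>E {..<m} (\<lambda>_. UNIV). \<Sum>y\<in>UNIV. f (c(m := y)))"
    by (simp add: sum.cartesian_product [symmetric] sum.swap [of _ UNIV])
  finally show ?thesis .
qed

lemma sum_PiE_prefix_delta:
  fixes T :: "(nat \<Rightarrow> 'x::finite) \<Rightarrow> 'b::comm_monoid_add"
  shows "(\<Sum>a\<in>Pi\<^sub>E {..<k} (\<lambda>_. UNIV). \<Sum>b\<in>Pi\<^sub>E {..<m} (\<lambda>_. UNIV).
            if \<forall>i<k. a i = b i then T b else 0) = (\<Sum>b\<in>Pi\<^sub>E {..<m} (\<lambda>_. UNIV). T b)"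
proof -
  have prefix_iff: "(\<forall>i<k. a i = b i) \<longleftrightarrow> a = restrict b {..<k}"
    if "a \<in> Pi\<^sub>E {..<k} (\<lambda>_. UNIV)" for a b :: "nat \<Rightarrow> 'x"
  proof
    assume "\<forall>i<k. a i = b i"
    then show "a = restrict b {..<k}"
      using that by (intro PiE_ext) auto
  qed auto
  have "(\<Sum>a\<in>Pi\<^sub>E {..<k} (\<lambda>_. UNIV). if \<forall>i<k. a i = b i then T b else 0) = T b" for b
    by (simp add: prefix_iff sum.delta finite_PiE cong: sum.cong)
  then show ?thesis
    by (subst sum.swap) simp
qed

lemma prod_list_map_upt_fun_upd:
  "prod_list (map (\<lambda>i. g i ((c(m := y)) i)) [0..<Suc m])
    = prod_list (map (\<lambda>i. g i (c i)) [0..<m]) * g m y"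
proof -
  have "prod_list (map (\<lambda>i. g i ((c(m := y)) i)) [0..<m])
      = prod_list (map (\<lambda>i. g i (c i)) [0..<m])"
    by (intro arg_cong[where f=prod_list] map_cong) auto
  then show ?thesis
    by simp
qed

lemma Delta_h_eq_sum_PiE:
  fixes h :: "nat \<Rightarrow> 'x::{finite,ab_group_add} \<Rightarrow> 'b::ring_1"
  assumes "0 < m"
  shows "Delta_h h m x = (\<Sum>c\<in>Pi\<^sub>E {..<m} (\<lambda>_. UNIV).
            if (\<Sum>i<m. c i) = x then prod_list (map (\<lambda>i. h i (c i)) [0..<m]) else 0)"
  using assms
proof (induction m arbitrary: x)
  case 0
  then show ?case by simp
next
  case (Suc m)
  show ?case
  proof (cases "m = 0")
    case True
    then show ?thesis
      by (simp add: sum_PiE_lessThan_Suc[where m=0] PiE_empty_domain)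
  next
    case False
    have split_sum: "{(b, c). b + c = x} = (\<lambda>y. (x - y, y)) ` UNIV"
      by (auto simp: image_iff algebra_simps)
    have "Delta_h h (Suc m) x = (\<Sum>y\<in>UNIV. Delta_h h m (x - y) * h m y)"
      using False by (simp add: split_sum sum.reindex inj_on_def)
    also have "\<dots> = (\<Sum>y\<in>UNIV. \<Sum>c\<in>Pi\<^sub>E {..<m} (\<lambda>_. UNIV).
        if (\<Sum>i<m. c i) + y = x then prod_list (map (\<lambda>i. h i (c i)) [0..<m]) * h m y else 0)"
      using False
      by (simp add: Suc.IH sum_distrib_right eq_diff_eq if_distrib[of "\<lambda>z. z * h m _"] cong: if_cong)
    also have "\<dots> = (\<Sum>c\<in>Pi\<^sub>E {..<m} (\<lambda>_. UNIV). \<Sum>y\<in>UNIV.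
        if (\<Sum>i<Suc m. (c(m := y)) i) = x
        then prod_list (map (\<lambda>i. h i ((c(m := y)) i)) [0..<Suc m]) else 0)"
    proof -
      have "(\<Sum>i<Suc m. (c(m := y)) i) = (\<Sum>i<m. c i) + y" for c :: "nat \<Rightarrow> 'x" and y
        by simp
      then show ?thesis
        by (simp only: prod_list_map_upt_fun_upd) (rule sum.swap)
    qed
    also have "\<dots> = (\<Sum>c\<in>Pi\<^sub>E {..<Suc m} (\<lambda>_. UNIV).
        if (\<Sum>i<Suc m. c i) = x then prod_list (map (\<lambda>i. h i (c i)) [0..<Suc m]) else 0)"
      by (rule sum_PiE_lessThan_Suc[symmetric])
    finally show ?thesis .
  qed
qed

lemma brace_circ_zero_right:
  assumes "is_brace cm"
  shows "cm a 0 = a"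
proof -
  have "cm a (0 + 0) = cm a 0 - a + cm a 0"
    using assms unfolding is_brace_def by blast
  then show ?thesis
    by (simp add: algebra_simps)
qed

lemma brace_circ_uminus_right:
  assumes "is_brace cm"
  shows "cm a (- b) = a + a - cm a b"
proof -
  have "cm a (b + - b) = cm a b - a + cm a (- b)"
    using assms unfolding is_brace_def by blast
  then show ?thesis
    using brace_circ_zero_right[OF assms] by (simp add: algebra_simps)
qed

lemma brace_lambda_action:
  assumes "is_brace cm" and lambda: "\<And>a b. \<sigma> a b = - a + cm a b"
  shows "\<sigma> a (\<sigma> b x) = \<sigma> (cm a b) x"
proof -
  have compat: "cm a (u + v) = cm a u - a + cm a v" for u v
    using assms(1) unfolding is_brace_def by blast
  have assoc: "cm (cm a b) x = cm a (cm b x)"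
    using assms(1) unfolding is_brace_def by blast
  have "\<sigma> a (\<sigma> b x) = - a + (cm a (- b) - a + cm a (cm b x))"
    by (simp only: lambda compat)
  also have "\<dots> = \<sigma> (cm a b) x"
    by (simp add: lambda brace_circ_uminus_right[OF assms(1)] assoc)
  finally show ?thesis .
qed

lemma circ_chain_Suc_0 [simp]: "circ_chain cm a (Suc 0) = a 0"
  by (simp add: circ_chain_def)

lemma circ_chain_Suc: "0 < i \<Longrightarrow> circ_chain cm a (Suc i) = cm (circ_chain cm a i) (a i)"
  by (simp add: circ_chain_def)

lemma circ_chain_cong:
  "0 < i \<Longrightarrow> (\<And>j. j < i \<Longrightarrow> a j = b j) \<Longrightarrow> circ_chain cm a i = circ_chain cm b i"
proof (induction i)
  case 0
  then show ?case by simp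
next
  case (Suc i)
  then show ?case
    by (cases "i = 0") (auto simp: circ_chain_Suc)
qed

lemma sigma_chain_0 [simp]: "sigma_chain \<sigma> a 0 = a 0"
  by (simp add: sigma_chain_def)

context
  fixes cm \<sigma> :: "'x \<Rightarrow> 'x \<Rightarrow> 'x"
  assumes action: "\<And>a b x. \<sigma> a (\<sigma> b x) = \<sigma> (cm a b) x"
begin

lemma foldr_action_upt:
  "0 < k \<Longrightarrow> foldr (\<lambda>i. \<sigma> (a i)) [0..<k] x = \<sigma> (circ_chain cm a k) x"
proof (induction k arbitrary: x)
  case 0
  then show ?case by simp
next
  case (Suc k)
  then show ?case
    by (cases "k = 0") (simp_all add: action circ_chain_Suc)
qed

lemma sigma_chain_eq_circ_chain:
  "0 < i \<Longrightarrow> sigma_chain \<sigma> a i = \<sigma> (circ_chain cm a i) (a i)"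
  unfolding sigma_chain_def by (rule foldr_action_upt)

lemma sigma_chain_inj:
  assumes inj: "\<And>c. inj (\<sigma> c)"
    and eq: "\<And>i. i < m \<Longrightarrow> sigma_chain \<sigma> a i = sigma_chain \<sigma> b i"
  shows "i < m \<Longrightarrow> a i = b i"
proof (induction i rule: less_induct)
  case (less i)
  show ?case
  proof (cases "i = 0")
    case True
    then show ?thesis
      using eq less.prems by fastforce
  next
    case False
    then have "circ_chain cm a i = circ_chain cm b i"
      using less by (intro circ_chain_cong) auto
    moreover have "\<sigma> (circ_chain cm a i) (a i) = \<sigma> (circ_chain cm b i) (b i)"
      using eq[OF less.prems] False by (simp add: sigma_chain_eq_circ_chain)
    ultimately show ?thesis
      using inj by (simp add: inj_eq)
  qed
qed

end

lemma bij_betw_sigma_chain: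
  fixes cm \<sigma> :: "'x::finite \<Rightarrow> 'x \<Rightarrow> 'x"
  assumes "\<And>a b x. \<sigma> a (\<sigma> b x) = \<sigma> (cm a b) x" and "\<And>c. inj (\<sigma> c)"
  shows "bij_betw (\<lambda>a. restrict (sigma_chain \<sigma> a) {..<m})
           (Pi\<^sub>E {..<m} (\<lambda>_. UNIV)) (Pi\<^sub>E {..<m} (\<lambda>_. UNIV))"
proof -
  let ?A = "Pi\<^sub>E {..<m} (\<lambda>_. UNIV :: 'x set)"
  have inj: "inj_on (\<lambda>a. restrict (sigma_chain \<sigma> a) {..<m}) ?A"
  proof
    fix a b
    assume "a \<in> ?A" "b \<in> ?A"
      and eq: "restrict (sigma_chain \<sigma> a) {..<m} = restrict (sigma_chain \<sigma> b) {..<m}"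
    have "sigma_chain \<sigma> a i = sigma_chain \<sigma> b i" if "i < m" for i
      using fun_cong[OF eq, of i] that by simp
    then have "a i = b i" if "i < m" for i
      using that by (rule sigma_chain_inj[OF assms])
    with \<open>a \<in> ?A\<close> \<open>b \<in> ?A\<close> show "a = b"
      by (intro PiE_ext) auto
  qed
  have "(\<lambda>a. restrict (sigma_chain \<sigma> a) {..<m}) ` ?A \<subseteq> ?A"
    by (intro image_subsetI) simp
  then have "(\<lambda>a. restrict (sigma_chain \<sigma> a) {..<m}) ` ?A = ?A"
    using inj by (intro endo_inj_surj) (simp_all add: finite_PiE)
  with inj show ?thesis
    unfolding bij_betw_def ..
qed

lemma circ_chain_eq_sum_sigma_chain:
  assumes "is_brace cm" and lambda: "\<And>a b. \<sigma> a b = - a + cm a b"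
  shows "0 < m \<Longrightarrow> circ_chain cm a m = (\<Sum>i<m. sigma_chain \<sigma> a i)"
proof (induction m)
  case 0
  then show ?case by simp
next
  case (Suc m)
  show ?case
  proof (cases "m = 0")
    case True
    then show ?thesis by simp
  next
    case False
    then have "circ_chain cm a (Suc m) = circ_chain cm a m + sigma_chain \<sigma> a m"
      by (simp add: circ_chain_Suc lambda
          sigma_chain_eq_circ_chain[OF brace_lambda_action[OF assms]])
    then show ?thesis
      using Suc False by simp
  qed
qed

lemma YB_wi_mult_h:
  assumes "YB_relations \<sigma> \<tau> h w wi"
  shows "wi x * h (\<sigma> x y) = h y * wi x"
proof -
  have inv: "wi x * w x = 1" "w x * wi x = 1" and comm: "w x * h y = h (\<sigma> x y) * w x"
    using assms by (simp_all add: YB_relations_def)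
  have "wi x * h (\<sigma> x y) = wi x * (h (\<sigma> x y) * w x) * wi x"
    by (simp add: mult.assoc inv)
  also have "\<dots> = (wi x * w x) * h y * wi x"
    by (simp add: mult.assoc comm)
  finally show ?thesis
    by (simp add: inv)
qed

lemma YB_wi_circ:
  assumes YB: "YB_relations \<sigma> \<tau> h w wi" and w_circ: "\<And>a b. w a * w b = w (cm a b)"
  shows "wi (cm x y) = wi y * wi x"
proof -
  have inv: "wi a * w a = 1" "w a * wi a = 1" for a
    using YB by (simp_all add: YB_relations_def)
  have "w (cm x y) * (wi y * wi x) = w x * (w y * wi y) * wi x"
    by (simp add: w_circ [symmetric] mult.assoc)
  then have "w (cm x y) * (wi y * wi x) = 1"
    by (simp add: inv)
  then have "wi (cm x y) * w (cm x y) * (wi y * wi x) = wi (cm x y)"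
    by (simp add: mult.assoc)
  then show ?thesis
    by (simp add: inv)
qed

lemma YB_prod_list_wi_rev_eq_circ_chain:
  assumes "YB_relations \<sigma> \<tau> h w wi" and "\<And>a b. w a * w b = w (cm a b)"
  shows "0 < k \<Longrightarrow> prod_list (map (\<lambda>j. wi (a j)) (rev [0..<k])) = wi (circ_chain cm a k)"
proof (induction k)
  case 0
  then show ?case by simp
next
  case (Suc k)
  then show ?case
    by (cases "k = 0") (simp_all add: circ_chain_Suc YB_wi_circ[OF assms])
qed

locale yb_tensor =
  fixes n :: nat
    and \<sigma> \<tau> :: "'x::finite \<Rightarrow> 'x \<Rightarrow> 'x"
    and h w wi :: "nat \<Rightarrow> 'x \<Rightarrow> 'b::ring_1"
  assumes tensor_model: "tensor_model n \<sigma> \<tau> h w wi"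
begin

lemma YB_relations_slot: "i < n \<Longrightarrow> YB_relations \<sigma> \<tau> (h i) (w i) (wi i)"
  using tensor_model by (simp add: tensor_model_def)

lemma h_mult_h: "i < n \<Longrightarrow> h i a * h i b = (if a = b then h i a else 0)"
  using YB_relations_slot by (simp add: YB_relations_def)

text \<open>\<open>in_slot i x\<close> says that \<open>x\<close> lies in the bicommutant of the generators of the \<open>i\<close>-th
  tensor factor: a subalgebra, and bicommutants of distinct factors commute elementwise.\<close>
definition in_slot :: "nat \<Rightarrow> 'b \<Rightarrow> bool" where
  "in_slot i x \<longleftrightarrow>
     (\<forall>z. (\<forall>g\<in>range (h i) \<union> range (w i) \<union> range (wi i). z * g = g * z) \<longrightarrow> z * x = x * z)"

lemma in_slot_h: "in_slot i (h i a)"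
  unfolding in_slot_def by auto

lemma in_slot_wi: "in_slot i (wi i a)"
  unfolding in_slot_def by auto

lemma in_slot_mult: "in_slot i x \<Longrightarrow> in_slot i y \<Longrightarrow> in_slot i (x * y)"
  unfolding in_slot_def by (metis mult.assoc)

lemma in_slot_commute:
  assumes "i < n" "j < n" "i \<noteq> j" "in_slot i x" "in_slot j y"
  shows "x * y = y * x"
proof -
  have "\<forall>g'\<in>range (h j) \<union> range (w j) \<union> range (wi j). g * g' = g' * g"
    if "g \<in> range (h i) \<union> range (w i) \<union> range (wi i)" for g
    using tensor_model assms(1-3) that unfolding tensor_model_def by blast
  then have "\<forall>g\<in>range (h i) \<union> range (w i) \<union> range (wi i). y * g = g * y"
    using assms(5) unfolding in_slot_def by metis
  then show ?thesis
    using assms(4) unfolding in_slot_def by metis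
qed

lemma commute_prod_list_upt:
  assumes "k < n" "in_slot k x" "j \<le> k" "\<And>i. i < j \<Longrightarrow> in_slot i (f i)"
  shows "x * prod_list (map f [0..<j]) = prod_list (map f [0..<j]) * x"
  using assms(3,4)
proof (induction j)
  case 0
  then show ?case by simp
next
  case (Suc j)
  have "x * f j = f j * x"
    using Suc.prems assms(1,2) by (intro in_slot_commute[of k j]) auto
  with Suc show ?case
    by (simp add: mult.assoc[symmetric]) (simp add: mult.assoc)
qed

lemma prod_list_upt_mult_prod_list_upt:
  assumes "j \<le> n" "\<And>i. i < j \<Longrightarrow> in_slot i (f i) \<and> in_slot i (g i)"
  shows "prod_list (map f [0..<j]) * prod_list (map g [0..<j])
    = prod_list (map (\<lambda>i. f i * g i) [0..<j])"
  using assms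
proof (induction j)
  case 0
  then show ?case by simp
next
  case (Suc j)
  have comm: "f j * prod_list (map g [0..<j]) = prod_list (map g [0..<j]) * f j"
    using Suc.prems by (intro commute_prod_list_upt[of j]) auto
  have "prod_list (map f [0..<Suc j]) * prod_list (map g [0..<Suc j])
      = prod_list (map f [0..<j]) * (f j * prod_list (map g [0..<j])) * g j"
    by (simp add: mult.assoc)
  also have "\<dots> = (prod_list (map f [0..<j]) * prod_list (map g [0..<j])) * (f j * g j)"
    by (simp add: comm mult.assoc)
  finally show ?case
    using Suc by simp
qed

end

locale brace_yb_tensor = yb_tensor n \<sigma> \<tau> h w wi
  for n and \<sigma> \<tau> :: "'x::{finite,ab_group_add} \<Rightarrow> 'x \<Rightarrow> 'x"
    and h w wi :: "nat \<Rightarrow> 'x \<Rightarrow> 'b::ring_1" +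
  fixes cm :: "'x \<Rightarrow> 'x \<Rightarrow> 'x"
  assumes brace: "is_brace cm"
    and lambda: "\<And>a b. \<sigma> a b = - a + cm a b"
    and inj_sigma: "\<And>a. inj (\<sigma> a)"
    and w_circ: "\<And>i a b. i < n \<Longrightarrow> w i a * w i b = w i (cm a b)"
begin

lemma sigma_action: "\<sigma> a (\<sigma> b x) = \<sigma> (cm a b) x"
  by (rule brace_lambda_action[OF brace lambda])

lemma F_col_Suc_eq:
  assumes "0 < m" "m < n"
  shows "F_col \<sigma> h wi (Suc m) = (\<Sum>a\<in>Pi\<^sub>E {..<m} (\<lambda>_. UNIV).
     prod_list (map (\<lambda>i. h i (sigma_chain \<sigma> a i)) [0..<m]) * wi m (circ_chain cm a m))"
proof -
  have "prod_list (map (\<lambda>j. wi m (a j)) (rev [0..<m])) = wi m (circ_chain cm a m)" for a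
    using assms by (intro YB_prod_list_wi_rev_eq_circ_chain[OF YB_relations_slot w_circ]) auto
  then show ?thesis
    using assms unfolding F_col_def by (simp cong: list.map_cong_simp)
qed

lemma F_col_eq_Delta_h:
  assumes "0 < m" "m < n"
  shows "F_col \<sigma> h wi (Suc m) = (\<Sum>x\<in>UNIV. Delta_h h m x * wi m x)"
proof -
  let ?A = "Pi\<^sub>E {..<m} (\<lambda>_. UNIV :: 'x set)"
  let ?g = "\<lambda>c. prod_list (map (\<lambda>i. h i (c i)) [0..<m]) * wi m (\<Sum>i<m. c i)"
  have "F_col \<sigma> h wi (Suc m) = (\<Sum>a\<in>?A. ?g (restrict (sigma_chain \<sigma> a) {..<m}))"
    unfolding F_col_Suc_eq[OF assms] circ_chain_eq_sum_sigma_chain[OF brace lambda assms(1)]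
    by (simp cong: list.map_cong_simp)
  also have "\<dots> = (\<Sum>c\<in>?A. ?g c)"
    by (rule sum.reindex_bij_betw[OF bij_betw_sigma_chain[OF sigma_action inj_sigma]])
  also have "\<dots> = (\<Sum>x\<in>UNIV. \<Sum>c\<in>?A.
      if (\<Sum>i<m. c i) = x then prod_list (map (\<lambda>i. h i (c i)) [0..<m]) * wi m x else 0)"
    by (subst sum.swap) (simp add: sum.delta)
  also have "\<dots> = (\<Sum>x\<in>UNIV. Delta_h h m x * wi m x)"
    by (simp add: Delta_h_eq_sum_PiE[OF assms(1)] sum_distrib_right
        if_distrib[of "\<lambda>z. z * wi m _"] cong: if_cong)
  finally show ?thesis .
qed

definition F_tot_factor :: "nat \<Rightarrow> (nat \<Rightarrow> 'x) \<Rightarrow> 'b" where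
  "F_tot_factor i a = (if i = 0 then h 0 (a 0) else h i (a i) * wi i (circ_chain cm a i))"

lemma in_slot_F_tot_factor: "in_slot i (F_tot_factor i a)"
  unfolding F_tot_factor_def by (auto intro: in_slot_mult in_slot_h in_slot_wi)

lemma F_tot_formula_Suc_eq:
  assumes "0 < k"
  shows "F_tot_formula cm h wi (Suc k) = (\<Sum>a\<in>Pi\<^sub>E {..<k} (\<lambda>_. UNIV).
           prod_list (map (\<lambda>i. F_tot_factor i a) [0..<k]) * wi k (circ_chain cm a k))"
  using assms unfolding F_tot_formula_def F_tot_factor_def diff_Suc_1
  by (simp cong: list.map_cong_simp if_cong)

lemma wi_circ_chain_mult_h_sigma_chain:
  assumes "0 < j" "j < n" "\<And>i. i < j \<Longrightarrow> a i = b i"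
  shows "wi j (circ_chain cm a j) * h j (sigma_chain \<sigma> b j)
    = h j (b j) * wi j (circ_chain cm b j)"
  using assms circ_chain_cong[of j a b cm]
  by (simp add: sigma_chain_eq_circ_chain[OF sigma_action] YB_wi_mult_h[OF YB_relations_slot])

lemma F_tot_factor_mult_h_sigma_chain:
  assumes "j < n" "\<And>i. i < j \<Longrightarrow> a i = b i"
  shows "F_tot_factor j a * h j (sigma_chain \<sigma> b j)
    = (if a j = b j then F_tot_factor j b else 0)"
proof (cases "j = 0")
  case True
  then show ?thesis
    using assms by (simp add: F_tot_factor_def h_mult_h)
next
  case False
  then have "F_tot_factor j a * h j (sigma_chain \<sigma> b j)
      = h j (a j) * h j (b j) * wi j (circ_chain cm b j)"
    using assms by (simp add: F_tot_factor_def mult.assoc wi_circ_chain_mult_h_sigma_chain)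
  then show ?thesis
    using False assms by (simp add: F_tot_factor_def h_mult_h)
qed

lemma prod_list_F_tot_factor_mult_h_sigma_chain:
  "j \<le> n \<Longrightarrow> prod_list (map (\<lambda>i. F_tot_factor i a * h i (sigma_chain \<sigma> b i)) [0..<j]) =
     (if \<forall>i<j. a i = b i then prod_list (map (\<lambda>i. F_tot_factor i b) [0..<j]) else 0)"
proof (induction j)
  case 0
  then show ?case by simp
next
  case (Suc j)
  show ?case
  proof (cases "\<forall>i<j. a i = b i")
    case True
    then have "(\<forall>i<Suc j. a i = b i) \<longleftrightarrow> a j = b j"
      by (auto simp: less_Suc_eq)
    then show ?thesis
      using Suc True F_tot_factor_mult_h_sigma_chain[of j a b] by simp
  next
    case False
    then show ?thesis
      using Suc by auto
  qed
qed

lemma F_tot_formula_term_mult_F_col_term: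
  assumes "0 < k" "Suc k < n"
  shows "(prod_list (map (\<lambda>i. F_tot_factor i a) [0..<k]) * wi k (circ_chain cm a k)) *
         (prod_list (map (\<lambda>i. h i (sigma_chain \<sigma> b i)) [0..<Suc k]) * wi (Suc k) (circ_chain cm b (Suc k)))
       = (if \<forall>i<k. a i = b i
          then prod_list (map (\<lambda>i. F_tot_factor i b) [0..<Suc k]) * wi (Suc k) (circ_chain cm b (Suc k))
          else 0)"
proof -
  let ?Fa = "prod_list (map (\<lambda>i. F_tot_factor i a) [0..<k])"
  let ?Fb = "prod_list (map (\<lambda>i. F_tot_factor i b) [0..<k])"
  let ?Hb = "prod_list (map (\<lambda>i. h i (sigma_chain \<sigma> b i)) [0..<k])"
  let ?Wa = "wi k (circ_chain cm a k)"
  let ?Wb = "wi (Suc k) (circ_chain cm b (Suc k))"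
  have comm: "?Wa * ?Hb = ?Hb * ?Wa"
    using assms by (intro commute_prod_list_upt[of k]) (auto simp: in_slot_wi in_slot_h)
  have "(?Fa * ?Wa) * (prod_list (map (\<lambda>i. h i (sigma_chain \<sigma> b i)) [0..<Suc k]) * ?Wb)
      = ?Fa * (?Wa * ?Hb) * h k (sigma_chain \<sigma> b k) * ?Wb"
    by (simp add: mult.assoc)
  also have "\<dots> = (?Fa * ?Hb) * (?Wa * h k (sigma_chain \<sigma> b k)) * ?Wb"
    by (simp add: comm mult.assoc)
  also have "?Fa * ?Hb = prod_list (map (\<lambda>i. F_tot_factor i a * h i (sigma_chain \<sigma> b i)) [0..<k])"
    using assms by (intro prod_list_upt_mult_prod_list_upt) (auto simp: in_slot_F_tot_factor in_slot_h)
  also have "\<dots> = (if \<forall>i<k. a i = b i then ?Fb else 0)"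
    using assms by (simp add: prod_list_F_tot_factor_mult_h_sigma_chain)
  finally have expand: "(?Fa * ?Wa) * (prod_list (map (\<lambda>i. h i (sigma_chain \<sigma> b i)) [0..<Suc k]) * ?Wb)
      = (if \<forall>i<k. a i = b i then ?Fb else 0) * (?Wa * h k (sigma_chain \<sigma> b k)) * ?Wb" .
  show ?thesis
  proof (cases "\<forall>i<k. a i = b i")
    case True
    then have "?Wa * h k (sigma_chain \<sigma> b k) = F_tot_factor k b"
      using assms by (simp add: F_tot_factor_def wi_circ_chain_mult_h_sigma_chain)
    with True show ?thesis
      unfolding expand by (simp add: mult.assoc)
  next
    case False
    then have no_prefix: "(\<forall>i<k. a i = b i) \<longleftrightarrow> False"
      by blast
    show ?thesis
      unfolding expand no_prefix if_False by simp
  qed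
qed

lemma F_tot_formula_mult_F_col:
  assumes "0 < k" "Suc k < n"
  shows "F_tot_formula cm h wi (Suc k) * F_col \<sigma> h wi (Suc (Suc k))
    = F_tot_formula cm h wi (Suc (Suc k))"
proof -
  have "F_tot_formula cm h wi (Suc k) * F_col \<sigma> h wi (Suc (Suc k))
      = (\<Sum>a\<in>Pi\<^sub>E {..<k} (\<lambda>_. UNIV). \<Sum>b\<in>Pi\<^sub>E {..<Suc k} (\<lambda>_. UNIV).
          if \<forall>i<k. a i = b i
          then prod_list (map (\<lambda>i. F_tot_factor i b) [0..<Suc k]) * wi (Suc k) (circ_chain cm b (Suc k))
          else 0)"
    unfolding F_tot_formula_Suc_eq[OF assms(1)] F_col_Suc_eq[OF zero_less_Suc assms(2)] sum_product
    by (simp only: F_tot_formula_term_mult_F_col_term[OF assms])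
  also have "\<dots> = F_tot_formula cm h wi (Suc (Suc k))"
    using assms by (simp add: sum_PiE_prefix_delta F_tot_formula_Suc_eq)
  finally show ?thesis .
qed

lemma F_tot_eq_F_tot_formula:
  "2 \<le> k \<Longrightarrow> k \<le> n \<Longrightarrow> F_tot \<sigma> h wi k = F_tot_formula cm h wi k"
proof (induction k rule: nat_induct_at_least)
  case base
  then show ?case
    using F_col_Suc_eq[of 1] F_tot_formula_Suc_eq[of 1] by (simp add: numeral_2_eq_2 F_tot_factor_def)
next
  case (Suc k)
  then obtain j where "k = Suc j" "0 < j"
    by (cases k) auto
  with Suc show ?case
    using F_tot_formula_mult_F_col[of j] by simp
qed

end

theorem lemma2p18:
  fixes \<iota> :: "'k::field \<Rightarrow> 'b::ring_1"
    and cm :: "'x::{finite,ab_group_add} \<Rightarrow> 'x \<Rightarrow> 'x"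
    and \<sigma> \<tau> :: "'x \<Rightarrow> 'x \<Rightarrow> 'x"
    and h w wi :: "nat \<Rightarrow> 'x \<Rightarrow> 'b"
    and n :: nat
  assumes "is_k_algebra \<iota>"
    and "\<forall>a. bij (\<sigma> a)"
    and "is_brace cm"
    and "\<forall>a b. \<sigma> a b = - a + cm a b"
    and "\<forall>a b. \<sigma> (\<sigma> a b) (\<tau> b a) = a"
    and "tensor_model n \<sigma> \<tau> h w wi"
    and "\<forall>i<n. \<forall>a b. w i a * w i b = w i (cm a b)"
    and "n \<ge> 2"
  shows "F_col \<sigma> h wi n = (\<Sum>a\<in>UNIV. Delta_h h (n-1) a * wi (n-1) a)
         \<and> F_tot \<sigma> h wi n = F_tot_formula cm h wi n"
proof -
  interpret brace_yb_tensor n \<sigma> \<tau> h w wi cm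
    using assms(2-4,6,7) by unfold_locales (auto intro: bij_is_inj)
  obtain m where "n = Suc m" "0 < m"
    using \<open>n \<ge> 2\<close> by (cases n) auto
  then show ?thesis
    using F_col_eq_Delta_h[of m] F_tot_eq_F_tot_formula[of n] by simp
qed

end
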